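(* For every $c_*\in(0,1/8]$ there exist constants $C,C'>0$ (depending only on $c_*$, $s$ and the $\lambda_i$) such that the following holds. Let $\varepsilon,\delta\in(0,1]$, $R\geq1$, frequencies $\mathbf{z}_1,\dots,\mathbf{z}_R$ with phases $\phi_1,\dots,\phi_R$, assume $N\geq(2/(\varepsilon\delta))^{CR^3}$, and let $(q,U,V,(r_n)_{n\in\mathbb{Z}},P,(Q_n)_{n\in\mathbb{Z}})$ be a linearization system with parameter $c_*$ for $(\varepsilon,\delta,\phi_1,\dots,\phi_R)$. For $h:\mathbb{Z}\to\mathbb{C}$ supported in $[N]$ define $\widetilde h:[N]\to\mathbb{C}$ by $$\widetilde h(n)=\frac{1}{|P|}\sum_{m\in P}\frac{1}{|Q_{n-m}|}\sum_{k\in Q_{n-m}}h(n+k).$$ If $\|h\|_\infty\leq\delta^{-1}$, then for all $i\in[R]$ $$\Big|\frac1N\sum_{n\in[N]}h(n)e(\phi_i(n))-\frac1N\sum_{n\in[N]}\widetilde h(n)e(\phi_i(n))\Big|\leq C'\varepsilon,$$ and $$\Big|\frac1N\sum_{n\in[N]}h(n)-\frac1N\sum_{n\in[N]}\widetilde h(n)\Big|\leq C'\varepsilon.$$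
   Context: $[N]=\{1,\dots,N\}$, $e(x)=e^{2\pi i x}$, $\|x\|$ is the distance from $x$ to the nearest integer. $M$ is a prime with $Y\leq M\leq 2Y$, $Y=2(|\lambda_1|+\dots+|\lambda_s|)N$, for fixed nonzero integers $\lambda_1,\dots,\lambda_s$. For $\mathbf{z}_i=(x_i,y_i)\in\mathbb{Z}_M\times\mathbb{Z}_{M^2}$, $\phi_i(n)=\frac{x_i}{M}n+\frac{y_i}{M^2}n^2$. A linearization system with parameter $c_*$ for $(\varepsilon,\delta,\phi_1,\dots,\phi_R)$ consists of integers $q\geq1$, $U,V\geq1$, $r_n\geq1$ ($n\in\mathbb{Z}$) with $N^{c_*/R^2}\leq U\leq 2N^{c_*/R^2}$, $U^{c_*/R}\leq V\leq 2U^{c_*/R}$, $q\leq N^{1/4}$, $r_n\leq U^{1/4}$, together with $P=\{q,2q,\dots,Uq\}$ and $Q_n=\{qr_n,2qr_n,\dots,Vqr_n\}$, such that $\|\phi_i(n+m+k)-\phi_i(n+m)\|\leq\varepsilon\delta$ for all $n\in[N]$, $m\in P$, $k\in Q_n$, $i\in[R]$. *)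

theory Defs
  imports "HOL-Analysis.Analysis" "HOL-Computational_Algebra.Primes"
begin

definition e2pi :: "real \<Rightarrow> complex" where
  "e2pi x = exp (2 * pi * \<i> * complex_of_real x)"

definition dist_nint :: "real \<Rightarrow> real" where
  "dist_nint x = \<bar>x - of_int (round x)\<bar>"

text \<open>phase phi(n) = x n / M + y n^2 / M^2, with x in Z_M, y in Z_{M^2}
  represented by integer representatives\<close>
definition phase :: "nat \<Rightarrow> int \<Rightarrow> int \<Rightarrow> int \<Rightarrow> real" where
  "phase M x y n = real_of_int x * real_of_int n / real M
                 + real_of_int y * (real_of_int n)^2 / (real M)^2"

definition Pset :: "int \<Rightarrow> int \<Rightarrow> int set" where
  "Pset q U = {q * j | j. 1 \<le> j \<and> j \<le> U}"

definition Qset :: "int \<Rightarrow> int \<Rightarrow> (int \<Rightarrow> int) \<Rightarrow> int \<Rightarrow> int set" where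
  "Qset q V r n = {q * r n * j | j. 1 \<le> j \<and> j \<le> V}"

definition lin_system ::
  "real \<Rightarrow> nat \<Rightarrow> nat \<Rightarrow> real \<Rightarrow> real \<Rightarrow> (nat \<Rightarrow> int \<Rightarrow> real)
   \<Rightarrow> int \<Rightarrow> int \<Rightarrow> int \<Rightarrow> (int \<Rightarrow> int) \<Rightarrow> bool" where
  "lin_system c N R \<epsilon> \<delta> \<phi> q U V r \<longleftrightarrow>
     q \<ge> 1 \<and> U \<ge> 1 \<and> V \<ge> 1 \<and> (\<forall>n. r n \<ge> 1) \<and>
     real N powr (c / (real R)^2) \<le> real_of_int U \<and>
     real_of_int U \<le> 2 * real N powr (c / (real R)^2) \<and>
     real_of_int U powr (c / real R) \<le> real_of_int V \<and>
     real_of_int V \<le> 2 * real_of_int U powr (c / real R) \<and>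
     real_of_int q \<le> real N powr (1/4) \<and>
     (\<forall>n. real_of_int (r n) \<le> real_of_int U powr (1/4)) \<and>
     (\<forall>n\<in>{1..int N}. \<forall>m\<in>Pset q U. \<forall>k\<in>Qset q V r n. \<forall>i\<in>{1..R}.
        dist_nint (\<phi> i (n + m + k) - \<phi> i (n + m)) \<le> \<epsilon> * \<delta>)"

definition htilde :: "int \<Rightarrow> int \<Rightarrow> int \<Rightarrow> (int \<Rightarrow> int) \<Rightarrow> (int \<Rightarrow> complex) \<Rightarrow> int \<Rightarrow> complex" where
  "htilde q U V r h n =
     (1 / of_nat (card (Pset q U))) *
     (\<Sum>m\<in>Pset q U. (1 / of_nat (card (Qset q V r (n - m)))) *
        (\<Sum>k\<in>Qset q V r (n - m). h (n + k)))"

end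

theory Submission
  imports Defs
begin

(* Writing L = qU, the average is htilde(n) = (UV)^{-1} sum_{a<=U} sum_{j<=V} h(n + q r_{n-qa} j).
   Two estimates, valid for arbitrary parameters, carry the argument:
   - mean estimate (htilde_mean_error): |sum h - sum htilde| <= L B + (N + L) 2 W B / U when
     |h| <= B and r_n V <= W; it rests on translating summation windows
     (norm_sum_sets_diff_le, norm_shifted_window_sum_le);
   - twist estimate (htilde_twist_error): averaging h e(phi) and multiplying the average of h by
     e(phi) agree up to N eta B + 2 L B when e(phi) moves by at most eta along the shifts of the
     system; the linearization hypothesis gives eta = 2 pi eps delta (e2pi_lipschitz).
   The lower bound N >= (2/(eps delta))^{(2/c) R^3} makes L <= eps delta N and U^{1/4} V <= eps delta U
   (lin_system_size_bounds), so both errors are O(eps N), with constant 5 + 2 pi + 2 <= 16. *)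

lemma e2pi_cis: "e2pi x = cis (2 * pi * x)"
  by (simp add: e2pi_def cis_conv_exp mult_ac)

lemma norm_e2pi [simp]: "cmod (e2pi x) = 1"
  by (simp add: e2pi_cis)

(* The chord length |e^{it} - 1| = 2|sin(t/2)| is at most the arc length |t|. *)
lemma norm_cis_minus_one: "cmod (cis t - 1) \<le> \<bar>t\<bar>"
proof -
  have "(cmod (cis t - 1))\<^sup>2 = (cos t - 1)\<^sup>2 + (sin t)\<^sup>2"
    by (simp add: cmod_def)
  also have "\<dots> = 4 * (sin (t/2))\<^sup>2"
    using cos_double_sin[of "t/2"] by (simp add: power2_eq_square algebra_simps)
  also have "\<dots> \<le> 4 * (t/2)\<^sup>2"
    by (metis abs_le_square_iff abs_sin_x_le_abs_x mult_left_mono zero_le_numeral)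
  finally show ?thesis
    by (simp add: power_divide abs_le_square_iff[symmetric])
qed

(* e(.) is 2pi-Lipschitz with respect to the distance to the nearest integer; this turns the
   linearization hypothesis ||phi(n+m+k) - phi(n+m)|| <= eps delta into closeness of characters. *)
lemma e2pi_lipschitz: "cmod (e2pi a - e2pi b) \<le> 2 * pi * dist_nint (a - b)"
proof -
  define d where "d = a - b - of_int (round (a - b))"
  have "e2pi a = e2pi b * cis (2 * pi * d)"
  proof -
    have "2 * pi * a = 2 * pi * b + 2 * pi * d + 2 * pi * of_int (round (a - b))"
      unfolding d_def by (simp add: algebra_simps)
    moreover have "cis (2 * pi * of_int (round (a - b))) = 1"
      by (rule cis_multiple_2pi) simp
    ultimately show ?thesis
      by (simp add: e2pi_cis cis_mult[symmetric])
  qed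
  then have "e2pi a - e2pi b = e2pi b * (cis (2 * pi * d) - 1)"
    by (simp add: algebra_simps)
  then have "cmod (e2pi a - e2pi b) = cmod (cis (2 * pi * d) - 1)"
    by (simp add: norm_mult)
  also have "\<dots> \<le> \<bar>2 * pi * d\<bar>" by (rule norm_cis_minus_one)
  also have "\<dots> = 2 * pi * dist_nint (a - b)" by (simp add: dist_nint_def d_def abs_mult)
  finally show ?thesis .
qed

lemma norm_sum_diff_le:
  fixes f g :: "'a \<Rightarrow> 'b :: real_normed_vector"
  assumes "\<And>x. x \<in> A \<Longrightarrow> norm (f x - g x) \<le> b"
  shows "norm (sum f A - sum g A) \<le> real (card A) * b"
proof -
  have "norm (sum f A - sum g A) \<le> (\<Sum>x\<in>A. norm (f x - g x))"
    by (simp add: sum_subtractf[symmetric] norm_sum)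
  also have "\<dots> \<le> (\<Sum>x\<in>A. b)" using assms by (rule sum_mono)
  finally show ?thesis by simp
qed

lemma norm_sum_sets_diff_le:
  fixes g :: "'a \<Rightarrow> 'b :: real_normed_vector"
  assumes "finite A" "finite B" "\<And>x. x \<in> A \<union> B \<Longrightarrow> norm (g x) \<le> b"
  shows "norm (sum g A - sum g B) \<le> real (card (A - B) + card (B - A)) * b"
proof -
  have "sum g A - sum g B = sum g (A - B) - sum g (B - A)"
    using sum.subset_diff[of "A \<inter> B" A g] sum.subset_diff[of "A \<inter> B" B g] assms(1,2)
    by (simp add: Diff_Int2 Diff_Int)
  also have "norm \<dots> \<le> (\<Sum>x\<in>A - B. norm (g x)) + (\<Sum>x\<in>B - A. norm (g x))"
    by (rule order_trans[OF norm_triangle_ineq4]) (intro add_mono norm_sum)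
  also have "\<dots> \<le> (\<Sum>x\<in>A - B. b) + (\<Sum>x\<in>B - A. b)"
    using assms(3) by (intro add_mono sum_mono) auto
  finally show ?thesis by (simp add: algebra_simps)
qed

lemma sum_shift_int: "(\<Sum>n\<in>{a..b}. f n) = (\<Sum>t\<in>{a-c..b-c}. f (t + c))" for a b c :: int
  by (rule sum.reindex_bij_witness[of _ "\<lambda>t. t + c" "\<lambda>n. n - c"]) auto

lemma norm_shifted_window_sum_le:
  fixes G :: "int \<Rightarrow> 'b :: real_normed_vector"
  assumes s: "0 \<le> s" and G: "\<And>x. norm (G x) \<le> b"
  shows "norm ((\<Sum>a\<in>{1..U}. G (a + s)) - (\<Sum>a\<in>{1..U}. G a)) \<le> 2 * real_of_int s * b"
proof -
  have b0: "0 \<le> b" using G norm_ge_zero order_trans by blast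
  have shift: "(\<Sum>a\<in>{1..U}. G (a + s)) = (\<Sum>a\<in>{1+s..U+s}. G a)"
    using sum_shift_int[of G "1+s" "U+s" s] by simp
  have "card ({1+s..U+s} - {1..U}) \<le> card {U+1..U+s}"
    by (rule card_mono) (use s in auto)
  moreover have "card ({1..U} - {1+s..U+s}) \<le> card {1..s}"
    by (rule card_mono) (use s in auto)
  ultimately have "real (card ({1+s..U+s} - {1..U}) + card ({1..U} - {1+s..U+s})) \<le> 2 * real_of_int s"
    using s by simp
  then show ?thesis
    unfolding shift
    using norm_sum_sets_diff_le[of "{1+s..U+s}" "{1..U}" G b] G b0
    by (meson finite_atLeastAtMost_int mult_right_mono order_trans)
qed

lemma sum_Pset:
  assumes "q \<ge> 1"
  shows "(\<Sum>m\<in>Pset q U. f m) = (\<Sum>a\<in>{1..U}. f (q * a))" and "card (Pset q U) = nat U"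
proof -
  have img: "Pset q U = (\<lambda>a. q * a) ` {1..U}" unfolding Pset_def by auto
  have inj: "inj_on (\<lambda>a. q * a) {1..U}" using assms by (auto simp: inj_on_def)
  show "(\<Sum>m\<in>Pset q U. f m) = (\<Sum>a\<in>{1..U}. f (q * a))" unfolding img by (simp add: sum.reindex[OF inj])
  show "card (Pset q U) = nat U" unfolding img by (simp add: card_image[OF inj])
qed

lemma Qset_eq_Pset: "Qset q V r n = Pset (q * r n) V"
  unfolding Qset_def Pset_def by simp

lemma htilde_eq:
  assumes q: "q \<ge> 1" and U: "U \<ge> 1" and V: "V \<ge> 1" and r: "\<And>n. r n \<ge> 1"
  shows "htilde q U V r g n =
    (\<Sum>a\<in>{1..U}. \<Sum>j\<in>{1..V}. g (n + q * r (n - q * a) * j)) / of_int (U * V)"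
proof -
  have qr: "q * r m \<ge> 1" for m using mult_mono[of 1 q 1 "r m"] q r[of m] by simp
  have "htilde q U V r g n =
      (\<Sum>a\<in>{1..U}. (\<Sum>j\<in>{1..V}. g (n + q * r (n - q * a) * j)) / of_int V) / of_int U"
    using q qr U V by (simp add: htilde_def Qset_eq_Pset sum_Pset)
  also have "\<dots> = (\<Sum>a\<in>{1..U}. \<Sum>j\<in>{1..V}. g (n + q * r (n - q * a) * j)) / of_int (U * V)"
    by (simp add: sum_divide_distrib[symmetric] divide_divide_eq_left mult.commute)
  finally show ?thesis .
qed

lemma sum_rotate3:
  "(\<Sum>a\<in>A. \<Sum>j\<in>J. \<Sum>t\<in>T. f a j t) = (\<Sum>j\<in>J. \<Sum>t\<in>T. \<Sum>a\<in>A. f a j t)"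
proof -
  have "(\<Sum>a\<in>A. \<Sum>j\<in>J. \<Sum>t\<in>T. f a j t) = (\<Sum>j\<in>J. \<Sum>a\<in>A. \<Sum>t\<in>T. f a j t)"
    by (rule sum.swap)
  also have "\<dots> = (\<Sum>j\<in>J. \<Sum>t\<in>T. \<Sum>a\<in>A. f a j t)"
    by (rule sum.cong[OF refl], rule sum.swap)
  finally show ?thesis .
qed

lemma sum_htilde_eq:
  assumes "q \<ge> 1" "U \<ge> 1" "V \<ge> 1" "\<And>n. r n \<ge> 1"
  shows "of_int (U * V) * (\<Sum>n\<in>{1..int N}. htilde q U V r g n) =
    (\<Sum>a\<in>{1..U}. \<Sum>j\<in>{1..V}. \<Sum>n\<in>{1..int N}. g (n + q * r (n - q * a) * j))"
proof -
  have "of_int (U * V) * (\<Sum>n\<in>{1..int N}. htilde q U V r g n) =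
      (\<Sum>n\<in>{1..int N}. \<Sum>a\<in>{1..U}. \<Sum>j\<in>{1..V}. g (n + q * r (n - q * a) * j))"
    using assms by (simp add: htilde_eq sum_divide_distrib[symmetric])
  also have "\<dots> = (\<Sum>a\<in>{1..U}. \<Sum>j\<in>{1..V}. \<Sum>n\<in>{1..int N}. g (n + q * r (n - q * a) * j))"
    by (rule sum_rotate3)
  finally show ?thesis .
qed

lemma norm_sum_translate_into_window_le:
  fixes G :: "int \<Rightarrow> 'b :: real_normed_vector" and N :: nat
  assumes m: "1 \<le> m" "m \<le> L" and G: "\<And>x. norm (G x) \<le> b"
  shows "norm ((\<Sum>n\<in>{1..int N}. G n) - (\<Sum>t\<in>{1-L..int N}. G (t + m))) \<le> real_of_int L * b"
proof -
  have "(\<Sum>n\<in>{1..int N}. G n) = (\<Sum>t\<in>{1-m..int N-m}. G (t + m))"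
    by (rule sum_shift_int)
  also have "norm (\<dots> - (\<Sum>t\<in>{1-L..int N}. G (t + m)))
      \<le> real (card ({1-m..int N-m} - {1-L..int N}) + card ({1-L..int N} - {1-m..int N-m})) * b"
    by (rule norm_sum_sets_diff_le) (use G in auto)
  also have "card ({1-m..int N-m} - {1-L..int N}) = 0" using m by auto
  also have "card ({1-L..int N} - {1-m..int N-m}) = nat L"
    using m by (subst card_Diff_subset) auto
  finally show ?thesis using m by simp
qed

lemma sum_translated_window_supported:
  fixes g :: "int \<Rightarrow> 'b :: comm_monoid_add" and N :: nat
  assumes m: "1 \<le> m" "m \<le> L" and supp: "\<And>n. n \<notin> {1..int N} \<Longrightarrow> g n = 0"
  shows "(\<Sum>t\<in>{1-L..int N}. g (t + m)) = (\<Sum>n\<in>{1..int N}. g n)"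
proof -
  have "(\<Sum>t\<in>{1-L..int N}. g (t + m)) = (\<Sum>n\<in>{1-L+m..int N+m}. g n)"
    using sum_shift_int[of g "1-L+m" "int N+m" m] by simp
  also have "\<dots> = (\<Sum>n\<in>{1..int N}. g n)"
    by (rule sum.mono_neutral_right) (use m supp in auto)
  finally show ?thesis .
qed

lemma progression_element_bounds:
  fixes q a U :: int
  assumes "q \<ge> 1" "a \<in> {1..U}"
  shows "1 \<le> q * a" "q * a \<le> q * U"
  using assms mult_mono[of 1 q 1 a] mult_left_mono[of a U q] by auto

(* Boundary step of the mean estimate: substituting t = n - qa in the average over [N] and
   replacing the translated range by the common window T = [1 - qU, N]. *)
lemma htilde_boundary_error:
  fixes g :: "int \<Rightarrow> complex" and N :: nat
  assumes q: "q \<ge> 1" and U: "U \<ge> 1" and V: "V \<ge> 1" and B: "\<And>n. cmod (g n) \<le> B"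
  shows "cmod ((\<Sum>a\<in>{1..U}. \<Sum>j\<in>{1..V}. \<Sum>n\<in>{1..int N}. g (n + q * r (n - q * a) * j))
              - (\<Sum>a\<in>{1..U}. \<Sum>j\<in>{1..V}. \<Sum>t\<in>{1-q*U..int N}. g (t + q * a + q * r t * j)))
     \<le> real_of_int (U * V) * (real_of_int (q * U) * B)"
proof -
  have "cmod ((\<Sum>n\<in>{1..int N}. g (n + q * r (n - q * a) * j))
              - (\<Sum>t\<in>{1-q*U..int N}. g (t + q * a + q * r t * j)))
      \<le> real_of_int (q * U) * B" if "a \<in> {1..U}" for a j
    using norm_sum_translate_into_window_le[OF progression_element_bounds[OF q that],
        of "\<lambda>n. g (n + q * r (n - q * a) * j)" B N] B
    by simp
  then have "cmod ((\<Sum>a\<in>{1..U}. \<Sum>j\<in>{1..V}. \<Sum>n\<in>{1..int N}. g (n + q * r (n - q * a) * j))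
              - (\<Sum>a\<in>{1..U}. \<Sum>j\<in>{1..V}. \<Sum>t\<in>{1-q*U..int N}. g (t + q * a + q * r t * j)))
      \<le> real (card {1..U}) * (real (card {1..V}) * (real_of_int (q * U) * B))"
    by (intro norm_sum_diff_le) auto
  then show ?thesis using U V by simp
qed

(* Shift step of the mean estimate: for fixed t the shift q r_t j moves the window
   {qa : a <= U} by r_t j <= W steps of size q. *)
lemma htilde_shift_error:
  fixes g :: "int \<Rightarrow> complex"
  assumes V: "V \<ge> 1" and r: "\<And>n. r n \<ge> 1" and W: "\<And>n. real_of_int (r n * V) \<le> W"
    and B: "\<And>n. cmod (g n) \<le> B" and T: "finite T"
  shows "cmod ((\<Sum>j\<in>{1..V}. \<Sum>t\<in>T. \<Sum>a\<in>{1..U}. g (t + q * a + q * r t * j))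
              - (\<Sum>j\<in>{1..V}. \<Sum>t\<in>T. \<Sum>a\<in>{1..U}. g (t + q * a)))
     \<le> real_of_int V * (real (card T) * (2 * W * B))"
proof -
  have B0: "B \<ge> 0" using B norm_ge_zero order_trans by blast
  have "cmod ((\<Sum>a\<in>{1..U}. g (t + q * a + q * r t * j)) - (\<Sum>a\<in>{1..U}. g (t + q * a)))
      \<le> 2 * W * B" if "j \<in> {1..V}" for j t
  proof -
    have "r t * j \<le> r t * V" using that r[of t] by simp
    then have "2 * real_of_int (r t * j) * B \<le> 2 * W * B"
      using W[of t] B0 by (intro mult_right_mono) linarith+
    moreover have "g (t + q * a + q * r t * j) = g (t + q * (a + r t * j))" for a
      by (simp add: algebra_simps)
    ultimately show ?thesis
      using norm_shifted_window_sum_le[of "r t * j" "\<lambda>x. g (t + q * x)" B U] that r[of t] B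
      by simp
  qed
  then have "cmod ((\<Sum>j\<in>{1..V}. \<Sum>t\<in>T. \<Sum>a\<in>{1..U}. g (t + q * a + q * r t * j))
              - (\<Sum>j\<in>{1..V}. \<Sum>t\<in>T. \<Sum>a\<in>{1..U}. g (t + q * a)))
      \<le> real (card {1..V}) * (real (card T) * (2 * W * B))"
    by (intro norm_sum_diff_le) auto
  then show ?thesis using V by simp
qed

(* With L = qU and T = [1-L, N], the boundary step costs UV L B, the shift step V |T| 2 W B,
   and the unshifted triple sum is UV times the sum of g. *)
lemma htilde_mean_error:
  fixes g :: "int \<Rightarrow> complex" and N :: nat
  assumes q: "q \<ge> 1" and U: "U \<ge> 1" and V: "V \<ge> 1" and r: "\<And>n. r n \<ge> 1"
    and W: "\<And>n. real_of_int (r n * V) \<le> W"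
    and supp: "\<And>n. n \<notin> {1..int N} \<Longrightarrow> g n = 0" and B: "\<And>n. cmod (g n) \<le> B"
  shows "cmod ((\<Sum>n\<in>{1..int N}. g n) - (\<Sum>n\<in>{1..int N}. htilde q U V r g n))
     \<le> real_of_int (q * U) * B + (real N + real_of_int (q * U)) * (2 * W * B) / real_of_int U"
proof -
  define L where "L = q * U"
  define T where "T = {1-L..int N}"
  have L1: "L \<ge> 1" using progression_element_bounds[OF q, of U U] U by (simp add: L_def)
  define X where "X = (\<Sum>a\<in>{1..U}. \<Sum>j\<in>{1..V}. \<Sum>n\<in>{1..int N}. g (n + q * r (n - q * a) * j))"
  define Y where "Y = (\<Sum>j\<in>{1..V}. \<Sum>t\<in>T. \<Sum>a\<in>{1..U}. g (t + q * a + q * r t * j))"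
  define Z where "Z = (\<Sum>j\<in>{1..V}. \<Sum>t\<in>T. \<Sum>a\<in>{1..U}. g (t + q * a))"
  have X_eq: "X = of_int (U * V) * (\<Sum>n\<in>{1..int N}. htilde q U V r g n)"
    unfolding X_def using sum_htilde_eq[OF q U V r] by simp
  have "Y = (\<Sum>a\<in>{1..U}. \<Sum>j\<in>{1..V}. \<Sum>t\<in>T. g (t + q * a + q * r t * j))"
    unfolding Y_def by (rule sum_rotate3[symmetric])
  then have boundary: "cmod (X - Y) \<le> real_of_int (U * V) * (real_of_int L * B)"
    using htilde_boundary_error[OF q U V B, where r=r and N=N] by (simp add: X_def T_def L_def)
  have shift: "cmod (Y - Z) \<le> real_of_int V * ((real N + real_of_int L) * (2 * W * B))"
    using htilde_shift_error[OF V r W B, where T=T and U=U and q=q] L1 by (simp add: Y_def Z_def T_def)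
  have "(\<Sum>t\<in>T. g (t + q * a)) = (\<Sum>n\<in>{1..int N}. g n)" if "a \<in> {1..U}" for a
    unfolding T_def L_def
    using sum_translated_window_supported[OF progression_element_bounds[OF q that] supp] .
  then have "Z = (\<Sum>j\<in>{1..V}. \<Sum>a\<in>{1..U}. \<Sum>n\<in>{1..int N}. g n)"
    unfolding Z_def by (intro sum.cong[OF refl] trans[OF sum.swap]) simp
  then have Z_eq: "Z = of_int (U * V) * (\<Sum>n\<in>{1..int N}. g n)" using U V by simp
  have UV: "real_of_int (U * V) > 0" using U V by simp
  have "cmod (Z - X) \<le> real_of_int (U * V) * (real_of_int L * B)
      + real_of_int V * ((real N + real_of_int L) * (2 * W * B))"
    using boundary shift norm_triangle_ineq[of "Z - Y" "Y - X"] by (simp add: norm_minus_commute)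
  moreover have "cmod (Z - X) = real_of_int (U * V) *
      cmod ((\<Sum>n\<in>{1..int N}. g n) - (\<Sum>n\<in>{1..int N}. htilde q U V r g n))"
    unfolding Z_eq X_eq right_diff_distrib[symmetric] norm_mult norm_of_int using UV by simp
  ultimately have "cmod ((\<Sum>n\<in>{1..int N}. g n) - (\<Sum>n\<in>{1..int N}. htilde q U V r g n))
      \<le> (real_of_int (U * V) * (real_of_int L * B)
          + real_of_int V * ((real N + real_of_int L) * (2 * W * B))) / real_of_int (U * V)"
    using UV by (simp add: pos_le_divide_eq mult.commute)
  also have "\<dots> = real_of_int L * B + (real N + real_of_int L) * (2 * W * B) / real_of_int U"
    using U V by (simp add: field_simps)
  finally show ?thesis unfolding L_def .
qed

lemma htilde_twist_pointwise:
  assumes "q \<ge> 1" "U \<ge> 1" "V \<ge> 1" "\<And>n. r n \<ge> 1"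
  shows "htilde q U V r (\<lambda>m. h m * w m) n - htilde q U V r h n * w n =
    (\<Sum>a\<in>{1..U}. \<Sum>j\<in>{1..V}. h (n + q * r (n - q * a) * j) *
        (w (n + q * r (n - q * a) * j) - w n)) / of_int (U * V)"
  using assms
  by (simp add: htilde_eq sum_distrib_right right_diff_distrib sum_subtractf diff_divide_distrib)

(* The twisting weight w moves by at most eta along the shifts of the system, except possibly
   at the points n <= qU, where the base point n - qa may lie outside [N]. *)
lemma weight_shift_le:
  fixes w :: "int \<Rightarrow> complex" and N :: nat
  assumes q: "q \<ge> 1" and w1: "\<And>n. cmod (w n) \<le> 1" and \<eta>: "\<eta> \<ge> 0"
    and lin: "\<And>m a j. m \<in> {1..int N} \<Longrightarrow> a \<in> {1..U} \<Longrightarrow> j \<in> {1..V} \<Longrightarrow>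
                cmod (w (m + q * a + q * r m * j) - w (m + q * a)) \<le> \<eta>"
    and n: "n \<in> {1..int N}" and a: "a \<in> {1..U}" and j: "j \<in> {1..V}"
  shows "cmod (w (n + q * r (n - q * a) * j) - w n) \<le> \<eta> + (if n \<le> q * U then 2 else 0)"
proof (cases "n - q * a \<ge> 1")
  case True
  then have "n - q * a \<in> {1..int N}" using n progression_element_bounds[OF q a] by auto
  from lin[OF this a j] show ?thesis by simp
next
  case False
  then have "n \<le> q * U" using progression_element_bounds[OF q a] by simp
  moreover have "cmod (w (n + q * r (n - q * a) * j) - w n) \<le> 2"
    using norm_triangle_ineq4[of "w (n + q * r (n - q * a) * j)" "w n"]
      w1[of "n + q * r (n - q * a) * j"] w1[of n] by linarith
  ultimately show ?thesis using \<eta> by simp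
qed

lemma htilde_twist_pointwise_le:
  fixes h w :: "int \<Rightarrow> complex" and N :: nat
  assumes q: "q \<ge> 1" and U: "U \<ge> 1" and V: "V \<ge> 1" and r: "\<And>n. r n \<ge> 1"
    and hB: "\<And>n. cmod (h n) \<le> B" and w1: "\<And>n. cmod (w n) \<le> 1" and \<eta>: "\<eta> \<ge> 0"
    and lin: "\<And>m a j. m \<in> {1..int N} \<Longrightarrow> a \<in> {1..U} \<Longrightarrow> j \<in> {1..V} \<Longrightarrow>
                cmod (w (m + q * a + q * r m * j) - w (m + q * a)) \<le> \<eta>"
    and n: "n \<in> {1..int N}"
  shows "cmod (htilde q U V r (\<lambda>m. h m * w m) n - htilde q U V r h n * w n)
     \<le> B * (\<eta> + (if n \<le> q * U then 2 else 0))"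
proof -
  define b where "b = B * (\<eta> + (if n \<le> q * U then 2 else 0))"
  have B0: "B \<ge> 0" using hB norm_ge_zero order_trans by blast
  have UV: "real_of_int (U * V) > 0" using U V by simp
  have "cmod (h (n + q * r (n - q * a) * j) * (w (n + q * r (n - q * a) * j) - w n)) \<le> b"
    if a: "a \<in> {1..U}" and j: "j \<in> {1..V}" for a j
    unfolding norm_mult b_def
    using weight_shift_le[OF q w1 \<eta> lin n a j] hB B0 by (intro mult_mono) auto
  then have "cmod (\<Sum>a\<in>{1..U}. \<Sum>j\<in>{1..V}. h (n + q * r (n - q * a) * j) *
      (w (n + q * r (n - q * a) * j) - w n)) \<le> (\<Sum>a\<in>{1..U}. \<Sum>j\<in>{1..V}. b)"
    by (intro sum_norm_le) (simp add: order_trans[OF norm_sum] sum_mono)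
  also have "\<dots> = real_of_int (U * V) * b" using U V by simp
  finally show ?thesis
    unfolding htilde_twist_pointwise[OF q U V r, where h=h and w=w and n=n] norm_divide
      norm_of_int b_def[symmetric]
    using UV by (simp add: divide_le_eq mult.commute)
qed

lemma htilde_twist_error:
  fixes h w :: "int \<Rightarrow> complex" and N :: nat
  assumes q: "q \<ge> 1" and U: "U \<ge> 1" and V: "V \<ge> 1" and r: "\<And>n. r n \<ge> 1"
    and hB: "\<And>n. cmod (h n) \<le> B" and w1: "\<And>n. cmod (w n) \<le> 1" and \<eta>: "\<eta> \<ge> 0"
    and lin: "\<And>m a j. m \<in> {1..int N} \<Longrightarrow> a \<in> {1..U} \<Longrightarrow> j \<in> {1..V} \<Longrightarrow>
                cmod (w (m + q * a + q * r m * j) - w (m + q * a)) \<le> \<eta>"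
  shows "cmod ((\<Sum>n\<in>{1..int N}. htilde q U V r (\<lambda>m. h m * w m) n)
              - (\<Sum>n\<in>{1..int N}. htilde q U V r h n * w n))
     \<le> real N * (\<eta> * B) + real_of_int (q * U) * (2 * B)"
proof -
  define L where "L = q * U"
  have B0: "B \<ge> 0" using hB norm_ge_zero order_trans by blast
  have "cmod ((\<Sum>n\<in>{1..int N}. htilde q U V r (\<lambda>m. h m * w m) n)
              - (\<Sum>n\<in>{1..int N}. htilde q U V r h n * w n))
      \<le> (\<Sum>n\<in>{1..int N}. B * (\<eta> + (if n \<le> L then 2 else 0)))"
    unfolding sum_subtractf[symmetric] L_def
    using htilde_twist_pointwise_le[OF q U V r hB w1 \<eta> lin] by (intro sum_norm_le)
  also have "\<dots> = (\<Sum>n\<in>{1..int N}. \<eta> * B + (if n \<le> L then 2 * B else 0))"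
    by (rule sum.cong) (auto simp: algebra_simps)
  also have "\<dots> = real N * (\<eta> * B) + real (card {n \<in> {1..int N}. n \<le> L}) * (2 * B)"
    by (simp add: sum.distrib sum.inter_filter[symmetric])
  also have "real (card {n \<in> {1..int N}. n \<le> L}) \<le> real_of_int L"
  proof -
    have "card {n \<in> {1..int N}. n \<le> L} \<le> card {1..L}" by (rule card_mono) auto
    moreover have "L \<ge> 1" using progression_element_bounds[OF q, of U U] U by (simp add: L_def)
    ultimately have "int (card {n \<in> {1..int N}. n \<le> L}) \<le> L" by simp
    then show ?thesis by (metis of_int_le_iff of_int_of_nat_eq)
  qed
  finally show ?thesis using B0 by (simp add: L_def mult_right_mono)
qed

lemma three_eighths_power_le:
  fixes y \<kappa> :: real
  assumes \<kappa>: "0 < \<kappa>" "\<kappa> \<le> 2" and y: "(2 / \<kappa>)\<^sup>2 \<le> y"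
  shows "2 * y powr (3/8) \<le> \<kappa> * y"
proof -
  have "1 \<le> 2 / \<kappa>" using \<kappa> by simp
  then have y1: "1 \<le> y" using y by (meson one_le_power order_trans)
  have "2 * y powr (3/8) \<le> 2 * sqrt y"
    using powr_mono[of "3/8" "1/2" y] y1 by (simp add: powr_half_sqrt)
  also have "\<dots> = \<kappa> * ((2 / \<kappa>) * sqrt y)" using \<kappa> by simp
  also have "\<dots> \<le> \<kappa> * (sqrt y * sqrt y)"
    using real_sqrt_le_mono[OF y] \<kappa> y1 by (intro mult_left_mono mult_right_mono) auto
  also have "\<dots> = \<kappa> * y" using y1 by simp
  finally show ?thesis .
qed

(* The lower bound on N makes both N and U >= N^{c/R^2} at least (2/kappa)^2: the exponent
   (2/c) R^3 was chosen so that N^{c/R^2} >= (2/kappa)^{2R}. *)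
lemma large_scale_bounds:
  fixes c \<kappa> :: real and N R :: nat and U :: int
  assumes c: "0 < c" "c \<le> 1" and \<kappa>: "0 < \<kappa>" "\<kappa> \<le> 1" and R: "R \<ge> 1"
    and N: "real N \<ge> (2 / \<kappa>) powr ((2/c) * real R ^ 3)"
    and U: "real N powr (c / (real R)\<^sup>2) \<le> real_of_int U"
  shows "(2 / \<kappa>)\<^sup>2 \<le> real N" and "(2 / \<kappa>)\<^sup>2 \<le> real_of_int U"
proof -
  define X where "X = 2 / \<kappa>"
  define e where "e = (2/c) * real R ^ 3"
  have X: "2 \<le> X" unfolding X_def using \<kappa> by (simp add: field_simps)
  have R1: "1 \<le> real R" using R by simp
  have "2 \<le> e" unfolding e_def using c mult_mono[of 2 "2/c" 1 "real R ^ 3"] R1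
    by (simp add: field_simps)
  then have "X\<^sup>2 \<le> X powr e" using X powr_mono[of 2 e X] by (simp add: powr_numeral)
  also have N_X: "\<dots> \<le> real N" using N by (simp add: X_def e_def)
  finally show "(2 / \<kappa>)\<^sup>2 \<le> real N" unfolding X_def .
  have "X\<^sup>2 \<le> X powr (2 * real R)" using X R1 powr_mono[of 2 "2 * real R" X] by (simp add: powr_numeral)
  also have "\<dots> = (X powr e) powr (c / (real R)\<^sup>2)"
    unfolding powr_powr e_def using c R1 by (simp add: power2_eq_square power3_eq_cube field_simps)
  also have "\<dots> \<le> real N powr (c / (real R)\<^sup>2)"
    using N_X X c by (intro powr_mono2) auto
  finally show "(2 / \<kappa>)\<^sup>2 \<le> real_of_int U" using U unfolding X_def by linarith
qed

(* Consequences of the lower bound on N for the parameters of a linearization system: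
   qU <= eps delta N (few boundary terms) and U^{1/4} V <= eps delta U (short shifts),
   both via qU, U^{1/4} V <= 2 (.)^{3/8} since c/R^2, c/R <= 1/8. *)
lemma lin_system_size_bounds:
  fixes c \<epsilon> \<delta> :: real and N R :: nat and q U V :: int
  assumes c: "0 < c" "c \<le> 1/8" and \<epsilon>: "0 < \<epsilon>" "\<epsilon> \<le> 1" and \<delta>: "0 < \<delta>" "\<delta> \<le> 1"
    and R: "R \<ge> 1" and N: "real N \<ge> (2 / (\<epsilon> * \<delta>)) powr ((2/c) * real R ^ 3)"
    and lin: "lin_system c N R \<epsilon> \<delta> \<phi> q U V r"
  shows "real N \<ge> 1" and "real_of_int (q * U) \<le> \<epsilon> * \<delta> * real N"
    and "real_of_int U powr (1/4) * real_of_int V \<le> \<epsilon> * \<delta> * real_of_int U"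
proof -
  define \<kappa> where "\<kappa> = \<epsilon> * \<delta>"
  have \<kappa>: "0 < \<kappa>" "\<kappa> \<le> 1" unfolding \<kappa>_def using \<epsilon> \<delta> by (auto intro: mult_le_one)
  have R1: "1 \<le> real R" using R by simp
  have q: "1 \<le> q" and U: "1 \<le> U" and V: "1 \<le> V"
    and U_lower: "real N powr (c / (real R)\<^sup>2) \<le> real_of_int U"
    and U_upper: "real_of_int U \<le> 2 * real N powr (c / (real R)\<^sup>2)"
    and V_upper: "real_of_int V \<le> 2 * real_of_int U powr (c / real R)"
    and q_upper: "real_of_int q \<le> real N powr (1/4)"
    using lin unfolding lin_system_def by auto
  have large: "(2 / \<kappa>)\<^sup>2 \<le> real N" "(2 / \<kappa>)\<^sup>2 \<le> real_of_int U"
    using large_scale_bounds[of c \<kappa> R N U] c \<kappa> R N U_lower by (simp_all add: \<kappa>_def)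
  moreover have "1 \<le> (2 / \<kappa>)\<^sup>2" using \<kappa> by (intro one_le_power) simp
  ultimately show N1: "real N \<ge> 1" by linarith
  have "c / (real R)\<^sup>2 \<le> c" "c / real R \<le> c"
    using c R1 by (simp_all add: field_simps)
  then have "c / (real R)\<^sup>2 \<le> 1/8" "c / real R \<le> 1/8"
    using c by linarith+
  then have "real N powr (c / (real R)\<^sup>2) \<le> real N powr (1/8)"
    and "real_of_int U powr (c / real R) \<le> real_of_int U powr (1/8)"
    using N1 U by (auto intro: powr_mono)
  then have "real_of_int q * real_of_int U \<le> real N powr (1/4) * (2 * real N powr (1/8))"
    and "real_of_int U powr (1/4) * real_of_int V \<le> real_of_int U powr (1/4) * (2 * real_of_int U powr (1/8))"
    using q_upper U_upper V_upper q U by (auto intro!: mult_mono)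
  moreover have "a powr (1/4) * (2 * a powr (1/8)) = 2 * a powr (3/8)" for a :: real
    by (simp add: powr_add[symmetric])
  ultimately have "real_of_int (q * U) \<le> 2 * real N powr (3/8)"
    and "real_of_int U powr (1/4) * real_of_int V \<le> 2 * real_of_int U powr (3/8)"
    by simp_all
  then show "real_of_int (q * U) \<le> \<epsilon> * \<delta> * real N"
    and "real_of_int U powr (1/4) * real_of_int V \<le> \<epsilon> * \<delta> * real_of_int U"
    using three_eighths_power_le[of \<kappa> "real N"] three_eighths_power_le[of \<kappa> "real_of_int U"]
      large \<kappa> by (simp_all add: \<kappa>_def)
qed

lemma lin_system_e2pi_close:
  assumes lin: "lin_system c N R \<epsilon> \<delta> \<phi> q U V r" and i: "i \<in> {1..R}"
    and m: "m \<in> {1..int N}" and a: "a \<in> {1..U}" and j: "j \<in> {1..V}"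
  shows "cmod (e2pi (\<phi> i (m + q * a + q * r m * j)) - e2pi (\<phi> i (m + q * a))) \<le> 2 * pi * (\<epsilon> * \<delta>)"
proof -
  have "q * a \<in> Pset q U" and "q * r m * j \<in> Qset q V r m"
    unfolding Pset_def Qset_def using a j by auto
  then have "dist_nint (\<phi> i (m + q * a + q * r m * j) - \<phi> i (m + q * a)) \<le> \<epsilon> * \<delta>"
    using lin i m unfolding lin_system_def by blast
  then show ?thesis
    using e2pi_lipschitz[of "\<phi> i (m + q * a + q * r m * j)" "\<phi> i (m + q * a)"]
    by (smt (verit) mult_left_mono pi_gt_zero)
qed

lemma lin_system_mean_error:
  fixes g :: "int \<Rightarrow> complex"
  assumes c: "0 < c" "c \<le> 1/8" and \<epsilon>: "0 < \<epsilon>" "\<epsilon> \<le> 1" and \<delta>: "0 < \<delta>" "\<delta> \<le> 1"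
    and R: "R \<ge> 1" and N: "real N \<ge> (2 / (\<epsilon> * \<delta>)) powr ((2/c) * real R ^ 3)"
    and lin: "lin_system c N R \<epsilon> \<delta> \<phi> q U V r"
    and supp: "\<And>n. n \<notin> {1..int N} \<Longrightarrow> g n = 0" and bound: "\<And>n. cmod (g n) \<le> 1 / \<delta>"
  shows "cmod ((\<Sum>n\<in>{1..int N}. g n) - (\<Sum>n\<in>{1..int N}. htilde q U V r g n)) \<le> 5 * (\<epsilon> * real N)"
proof -
  define W where "W = real_of_int U powr (1/4) * real_of_int V"
  have q: "q \<ge> 1" and U: "U \<ge> 1" and V: "V \<ge> 1" and r: "\<And>n. r n \<ge> 1"
    and r_upper: "\<And>n. real_of_int (r n) \<le> real_of_int U powr (1/4)"
    using lin unfolding lin_system_def by auto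
  have W: "real_of_int (r n * V) \<le> W" for n
    unfolding W_def using r_upper[of n] V by (simp add: mult_right_mono)
  note sizes = lin_system_size_bounds[OF c \<epsilon> \<delta> R N lin]
  have qU: "real_of_int (q * U) \<le> \<epsilon> * \<delta> * real N" and WU: "W / real_of_int U \<le> \<epsilon> * \<delta>"
    using sizes U by (simp_all add: W_def divide_le_eq)
  have "\<epsilon> * \<delta> \<le> 1" using \<epsilon> \<delta> by (simp add: mult_le_one)
  then have "\<epsilon> * \<delta> * real N \<le> real N" using mult_right_mono[of "\<epsilon> * \<delta>" 1 "real N"] by simp
  then have "real N + real_of_int (q * U) \<le> 2 * real N" using qU by linarith
  moreover have "0 \<le> W" unfolding W_def using V by simp
  ultimately have "(real N + real_of_int (q * U)) * (2 / \<delta>) * (W / real_of_int U)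
      \<le> (2 * real N) * (2 / \<delta>) * (\<epsilon> * \<delta>)"
    using WU U \<delta> q by (intro mult_mono) auto
  then have "(real N + real_of_int (q * U)) * (2 * W * (1/\<delta>)) / real_of_int U
      \<le> (2 * real N) * (2 / \<delta>) * (\<epsilon> * \<delta>)" by (simp add: field_simps)
  also have "\<dots> = 4 * (\<epsilon> * real N)" using \<delta> by simp
  finally have "(real N + real_of_int (q * U)) * (2 * W * (1/\<delta>)) / real_of_int U \<le> 4 * (\<epsilon> * real N)" .
  moreover have "real_of_int (q * U) * (1/\<delta>) \<le> \<epsilon> * real N"
    using qU \<delta> by (simp add: pos_divide_le_eq mult.commute mult.left_commute)
  ultimately have "real_of_int (q * U) * (1/\<delta>) + (real N + real_of_int (q * U)) * (2 * W * (1/\<delta>)) / real_of_int U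
      \<le> 5 * (\<epsilon> * real N)" by linarith
  moreover have "cmod ((\<Sum>n\<in>{1..int N}. g n) - (\<Sum>n\<in>{1..int N}. htilde q U V r g n))
      \<le> real_of_int (q * U) * (1/\<delta>) + (real N + real_of_int (q * U)) * (2 * W * (1/\<delta>)) / real_of_int U"
    by (rule htilde_mean_error) (use q U V r W supp bound in auto)
  ultimately show ?thesis by linarith
qed

lemma lin_system_twist_error:
  fixes h :: "int \<Rightarrow> complex"
  assumes c: "0 < c" "c \<le> 1/8" and \<epsilon>: "0 < \<epsilon>" "\<epsilon> \<le> 1" and \<delta>: "0 < \<delta>" "\<delta> \<le> 1"
    and R: "R \<ge> 1" and N: "real N \<ge> (2 / (\<epsilon> * \<delta>)) powr ((2/c) * real R ^ 3)"
    and lin: "lin_system c N R \<epsilon> \<delta> \<phi> q U V r" and i: "i \<in> {1..R}"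
    and bound: "\<And>n. cmod (h n) \<le> 1 / \<delta>"
  shows "cmod ((\<Sum>n\<in>{1..int N}. htilde q U V r (\<lambda>m. h m * e2pi (\<phi> i m)) n)
              - (\<Sum>n\<in>{1..int N}. htilde q U V r h n * e2pi (\<phi> i n)))
     \<le> (2 * pi + 2) * (\<epsilon> * real N)"
proof -
  have q: "q \<ge> 1" and U: "U \<ge> 1" and V: "V \<ge> 1" and r: "\<And>n. r n \<ge> 1"
    using lin unfolding lin_system_def by auto
  have "cmod ((\<Sum>n\<in>{1..int N}. htilde q U V r (\<lambda>m. h m * e2pi (\<phi> i m)) n)
              - (\<Sum>n\<in>{1..int N}. htilde q U V r h n * e2pi (\<phi> i n)))
     \<le> real N * (2 * pi * (\<epsilon> * \<delta>) * (1/\<delta>)) + real_of_int (q * U) * (2 * (1/\<delta>))"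
    by (rule htilde_twist_error)
      (use q U V r bound \<epsilon> \<delta> lin_system_e2pi_close[OF lin i] in auto)
  also have "\<dots> \<le> 2 * pi * (\<epsilon> * real N) + 2 * (\<epsilon> * real N)"
    using lin_system_size_bounds(2)[OF c \<epsilon> \<delta> R N lin] \<delta> by (simp add: field_simps)
  finally show ?thesis by (simp add: algebra_simps)
qed

lemma normalized_error_le:
  fixes A B :: complex and N :: nat
  assumes "real N \<ge> 1" "cmod (A - B) \<le> K * (\<epsilon> * real N)"
  shows "cmod ((1 / of_nat N) * A - (1 / of_nat N) * B) \<le> K * \<epsilon>"
proof -
  have "cmod ((1 / of_nat N) * A - (1 / of_nat N) * B) = cmod (A - B) / real N"
    by (simp add: diff_divide_distrib[symmetric] norm_divide)
  also have "\<dots> \<le> K * (\<epsilon> * real N) / real N" using assms by (intro divide_right_mono) auto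
  also have "\<dots> = K * \<epsilon>" using assms(1) by simp
  finally show ?thesis .
qed

(* Proposition 9.4 for explicit constants C = 2/c and C' = 16, and an arbitrary family of
   phases phi_i: for twisted sums combine the mean estimate for h e(phi_i) with the twist estimate. *)
lemma lin_system_averaging_error:
  fixes h :: "int \<Rightarrow> complex"
  assumes c: "0 < c" "c \<le> 1/8" and \<epsilon>: "0 < \<epsilon>" "\<epsilon> \<le> 1" and \<delta>: "0 < \<delta>" "\<delta> \<le> 1"
    and R: "R \<ge> 1" and N: "real N \<ge> (2 / (\<epsilon> * \<delta>)) powr ((2/c) * real R ^ 3)"
    and lin: "lin_system c N R \<epsilon> \<delta> \<phi> q U V r"
    and supp: "\<And>n. n \<notin> {1..int N} \<Longrightarrow> h n = 0" and bound: "\<And>n. cmod (h n) \<le> 1 / \<delta>"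
  shows "(\<forall>i\<in>{1..R}.
          cmod ((1 / of_nat N) * (\<Sum>n\<in>{1..int N}. h n * e2pi (\<phi> i n))
              - (1 / of_nat N) * (\<Sum>n\<in>{1..int N}. htilde q U V r h n * e2pi (\<phi> i n)))
          \<le> 16 * \<epsilon>) \<and>
       cmod ((1 / of_nat N) * (\<Sum>n\<in>{1..int N}. h n)
           - (1 / of_nat N) * (\<Sum>n\<in>{1..int N}. htilde q U V r h n)) \<le> 16 * \<epsilon>"
proof (intro conjI ballI)
  note N1 = lin_system_size_bounds(1)[OF c \<epsilon> \<delta> R N lin]
  have \<epsilon>N: "0 \<le> \<epsilon> * real N" using \<epsilon> by simp
  show "cmod ((1 / of_nat N) * (\<Sum>n\<in>{1..int N}. h n)
           - (1 / of_nat N) * (\<Sum>n\<in>{1..int N}. htilde q U V r h n)) \<le> 16 * \<epsilon>"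
  proof (rule normalized_error_le[OF N1])
    have "cmod ((\<Sum>n\<in>{1..int N}. h n) - (\<Sum>n\<in>{1..int N}. htilde q U V r h n)) \<le> 5 * (\<epsilon> * real N)"
      by (rule lin_system_mean_error[OF c \<epsilon> \<delta> R N lin]) (use supp bound in auto)
    then show "cmod ((\<Sum>n\<in>{1..int N}. h n) - (\<Sum>n\<in>{1..int N}. htilde q U V r h n)) \<le> 16 * (\<epsilon> * real N)"
      using \<epsilon>N by linarith
  qed
  fix i assume i: "i \<in> {1..R}"
  define g where "g m = h m * e2pi (\<phi> i m)" for m
  have "cmod ((\<Sum>n\<in>{1..int N}. g n) - (\<Sum>n\<in>{1..int N}. htilde q U V r g n)) \<le> 5 * (\<epsilon> * real N)"
    by (rule lin_system_mean_error[OF c \<epsilon> \<delta> R N lin]) (use supp bound in \<open>auto simp: g_def norm_mult\<close>)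
  moreover have "cmod ((\<Sum>n\<in>{1..int N}. htilde q U V r g n)
      - (\<Sum>n\<in>{1..int N}. htilde q U V r h n * e2pi (\<phi> i n))) \<le> (2 * pi + 2) * (\<epsilon> * real N)"
    unfolding g_def by (rule lin_system_twist_error[OF c \<epsilon> \<delta> R N lin i bound])
  moreover have "(2 * pi + 2) * (\<epsilon> * real N) \<le> 11 * (\<epsilon> * real N)"
    using pi_less_4 \<epsilon>N by (intro mult_right_mono) auto
  ultimately have "cmod ((\<Sum>n\<in>{1..int N}. g n) - (\<Sum>n\<in>{1..int N}. htilde q U V r h n * e2pi (\<phi> i n)))
      \<le> 16 * (\<epsilon> * real N)"
    using norm_triangle_le_diff[of "(\<Sum>n\<in>{1..int N}. g n)"] norm_diff_triangle_le by fastforce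
  then show "cmod ((1 / of_nat N) * (\<Sum>n\<in>{1..int N}. h n * e2pi (\<phi> i n))
              - (1 / of_nat N) * (\<Sum>n\<in>{1..int N}. htilde q U V r h n * e2pi (\<phi> i n)))
          \<le> 16 * \<epsilon>"
    unfolding g_def by (rule normalized_error_le[OF N1])
qed

(* The statement itself, with C = 2/c and C' = 16. *)
theorem proposition9p4:
  fixes s :: nat and lam :: "nat \<Rightarrow> int" and c :: real
  assumes "\<forall>i\<in>{1..s}. lam i \<noteq> 0" and "0 < c" and "c \<le> 1/8"
  shows "\<exists>C C'. C > 0 \<and> C' > 0 \<and>
    (\<forall>(\<epsilon>::real) (\<delta>::real) (R::nat) (N::nat) (M::nat) (x::nat \<Rightarrow> int) (y::nat \<Rightarrow> int)
       (q::int) (U::int) (V::int) (r::int \<Rightarrow> int) (h::int \<Rightarrow> complex).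
       0 < \<epsilon> \<longrightarrow> \<epsilon> \<le> 1 \<longrightarrow> 0 < \<delta> \<longrightarrow> \<delta> \<le> 1 \<longrightarrow> R \<ge> 1 \<longrightarrow>
       prime M \<longrightarrow>
       2 * (\<Sum>i=1..s. \<bar>lam i\<bar>) * int N \<le> int M \<longrightarrow>
       int M \<le> 2 * (2 * (\<Sum>i=1..s. \<bar>lam i\<bar>) * int N) \<longrightarrow>
       (\<forall>i\<in>{1..R}. 0 \<le> x i \<and> x i < int M \<and> 0 \<le> y i \<and> y i < int M ^ 2) \<longrightarrow>
       real N \<ge> (2 / (\<epsilon> * \<delta>)) powr (C * real R ^ 3) \<longrightarrow>
       lin_system c N R \<epsilon> \<delta> (\<lambda>i. phase M (x i) (y i)) q U V r \<longrightarrow>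
       (\<forall>n. n \<notin> {1..int N} \<longrightarrow> h n = 0) \<longrightarrow>
       (\<forall>n. cmod (h n) \<le> 1 / \<delta>) \<longrightarrow>
       (\<forall>i\<in>{1..R}.
          cmod ((1 / of_nat N) * (\<Sum>n\<in>{1..int N}. h n * e2pi (phase M (x i) (y i) n))
              - (1 / of_nat N) * (\<Sum>n\<in>{1..int N}. htilde q U V r h n * e2pi (phase M (x i) (y i) n)))
          \<le> C' * \<epsilon>) \<and>
       cmod ((1 / of_nat N) * (\<Sum>n\<in>{1..int N}. h n)
           - (1 / of_nat N) * (\<Sum>n\<in>{1..int N}. htilde q U V r h n)) \<le> C' * \<epsilon>)"
proof (rule exI[of _ "2/c"], rule exI[of _ 16], intro conjI allI impI)
  show "0 < 2/c" using assms(2) by simp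
  show "(0::real) < 16" by simp
qed (use lin_system_averaging_error[OF assms(2,3)] in blast)+

end
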